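(* Let $G_{\tan\cup\sec}$ be the $q$-grammar with master variables $\{x,y\}$, rule $x_j\mapsto q^j(1+x_jx_{j+1})$, $y_j\mapsto q^jx_jy_{j+1}$ ($j\ge0$), and order DIO, with $q$-derivative $D$, and let $\Omega(D^n(x_0))$ be the number of terms of $D^n(x_0)$. Then for $n\ge3$, \[ \Omega(D^n(x_0))=\begin{cases}2k^3+5k^2+2,& n=2k+1,\\ (k+2)(2k^2-2k+1),& n=2k.\end{cases} \]
   Context: $\mathbb{K}$ is a commutative ring with unity and characteristic zero, $q$ an indeterminate. For a set $S$ of master variables, $\mathbb{S}=\{s_i:s\in S,\ i\ge0\}$ is a set of non-commuting variables, $F(\mathbb{S})$ the free group on $\mathbb{S}$, $\mathbb{E}=\mathbb{K}[q][F(\mathbb{S})]$ its group algebra. A rule $R$ assigns to each $s_i$ an element of $\mathbb{E}$. The up-arrow $\uparrow$ is the linear map replacing each letter $s_i^{\pm1}$ of a word by $s_{i+1}^{\pm1}$. DIO is the order that stably reorders the letters of a word according to the position of their underlying variable in the sequence $\dots,x_2,y_2,x_1,y_1,x_0,y_0$ (extended linearly). The $q$-derivative of a $q$-grammar $(S,R,\rho)$ is the $\mathbb{K}[q]$-linear map with $D(w_1\cdots w_n)=\sum_{j=1}^n\rho\big(w_1\cdots w_{j-1}R(w_j)\uparrow(w_{j+1}\cdots w_n)\big)$ for letters $w_j$, $D^0=\mathrm{id}$, $D^k=D\circ D^{k-1}$. Writing an element of $\mathbb{E}$ as $\sum_{w\in F(\mathbb{S})}a_ww$, its terms are the words $w$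 (including possibly the empty word) with $a_w\ne0$. *)

theory Defs
  imports "HOL-Computational_Algebra.Polynomial"
begin

text \<open>Letters s_i are pairs (s, i) of a master variable s and an index i.
  Words (positive words of the free group) are lists of letters.
  An element of the algebra is a function from words to coefficients in K[q]
  (finite support in all cases considered).\<close>

type_synonym 's word = "('s \<times> nat) list"
type_synonym ('s, 'k) elem = "'s word \<Rightarrow> 'k poly"

definition up :: "'s word \<Rightarrow> 's word" where
  "up w = map (\<lambda>(s, i). (s, Suc i)) w"

definition terms :: "('s, 'k::zero) elem \<Rightarrow> 's word set" where
  "terms f = {w. f w \<noteq> 0}"

text \<open>a rule assigns to each letter a finite formal sum of monomials (coefficient, word)\<close>
type_synonym ('s, 'k) rule = "('s \<times> nat) \<Rightarrow> ('k poly \<times> 's word) list"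

definition qder_word ::
  "('s, 'k::comm_ring_1) rule \<Rightarrow> ('s word \<Rightarrow> 's word) \<Rightarrow> 's word \<Rightarrow> ('s, 'k) elem" where
  "qder_word R \<rho> w = (\<lambda>v. \<Sum>j<length w.
       sum_list (map (\<lambda>(c, u). if \<rho> (take j w @ u @ up (drop (Suc j) w)) = v then c else 0)
                     (R (w ! j))))"

definition qder ::
  "('s, 'k::comm_ring_1) rule \<Rightarrow> ('s word \<Rightarrow> 's word) \<Rightarrow> ('s, 'k) elem \<Rightarrow> ('s, 'k) elem" where
  "qder R \<rho> f = (\<lambda>v. \<Sum>w\<in>terms f. f w * qder_word R \<rho> w v)"

definition word_elem :: "'s word \<Rightarrow> ('s, 'k::comm_ring_1) elem" where
  "word_elem u = (\<lambda>w. if w = u then 1 else 0)"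

definition qvar :: "'k::comm_ring_1 poly" where
  "qvar = [:0, 1:]"

datatype xy = X | Y

text \<open>DIO: stable reordering by position in the sequence ..., x2, y2, x1, y1, x0, y0\<close>
definition dio_pos :: "xy \<times> nat \<Rightarrow> int" where
  "dio_pos l = (case l of (X, i) \<Rightarrow> - 2 * int i | (Y, i) \<Rightarrow> - 2 * int i + 1)"

definition DIO :: "xy word \<Rightarrow> xy word" where
  "DIO w = sort_key dio_pos w"

definition tansec_rule :: "(xy, 'k::comm_ring_1) rule" where
  "tansec_rule l = (case l of
      (X, j) \<Rightarrow> [(qvar ^ j, []), (qvar ^ j, [(X, j), (X, Suc j)])]
    | (Y, j) \<Rightarrow> [(qvar ^ j, [(X, j), (Y, Suc j)])])"

definition D_tansec :: "(xy, 'k::comm_ring_1) elem \<Rightarrow> (xy, 'k) elem" where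
  "D_tansec = qder tansec_rule DIO"

end

theory Submission
  imports Defs
begin

text \<open>Every coefficient of the rule is a power of q, which evaluates to 1 at q = 1. Hence each
  coefficient of D^n(x_0) evaluates at q = 1 to a positive integer, so no cancellation ever occurs:
  the terms of D f are exactly the DIO-sorted words obtained from a term of f by replacing one
  letter x_j by 1 or by x_j x_{j+1} and raising the indices of all later letters. Starting from
  x_0 no y occurs, and every term is a block x_{m+1}^p x_m^r, on which such a step acts
  explicitly. An induction from n = 2 determines the parameters (m, p, r) of the terms of
  D^n(x_0), and counting them gives the two formulas.\<close>

section \<open>Terms of a q-derivative when no cancellation occurs\<close>

definition successors ::
  "(('s \<times> nat) \<Rightarrow> 's word set) \<Rightarrow> ('s word \<Rightarrow> 's word) \<Rightarrow> 's word \<Rightarrow> 's word set" where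
  "successors U \<rho> w = (\<Union>j<length w. (\<lambda>u. \<rho> (take j w @ u @ up (drop (Suc j) w))) ` U (w ! j))"

definition positive_at_one :: "('s, 'k::comm_ring_1) elem \<Rightarrow> bool" where
  "positive_at_one f \<longleftrightarrow> finite (terms f) \<and> (\<forall>w\<in>terms f. \<exists>m>0. poly (f w) 1 = of_nat m)"

lemma poly_sum_list_select_at_one:
  "\<forall>(c, u)\<in>set xs. poly c 1 = 1 \<Longrightarrow>
   poly (sum_list (map (\<lambda>(c, u). if P u then c else 0) xs)) 1
     = of_nat (length (filter P (map snd xs)))"
  by (induction xs) auto

lemma sum_list_select_eq_0:
  "\<forall>(c, u)\<in>set xs. \<not> P u \<Longrightarrow> sum_list (map (\<lambda>(c, u). if P u then c else 0) xs) = 0"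
  by (induction xs) auto

definition step_count ::
  "('s, 'k::zero) rule \<Rightarrow> ('s word \<Rightarrow> 's word) \<Rightarrow> 's word \<Rightarrow> 's word \<Rightarrow> nat" where
  "step_count R \<rho> w v = (\<Sum>j<length w.
     length (filter (\<lambda>u. \<rho> (take j w @ u @ up (drop (Suc j) w)) = v) (map snd (R (w ! j)))))"

lemma poly_qder_word_at_one:
  assumes "\<And>l. \<forall>(c, u)\<in>set (R l). poly c 1 = 1"
  shows "poly (qder_word R \<rho> w v) 1 = of_nat (step_count R \<rho> w v)"
  unfolding qder_word_def step_count_def poly_sum of_nat_sum
  by (intro sum.cong refl poly_sum_list_select_at_one assms)

lemma qder_word_eq_0:
  assumes "v \<notin> successors (\<lambda>l. snd ` set (R l)) \<rho> w"
  shows "qder_word R \<rho> w v = 0"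
  unfolding qder_word_def
  using assms by (intro sum.neutral ballI sum_list_select_eq_0) (force simp: successors_def)

lemma mem_successors_iff_step_count:
  "v \<in> successors (\<lambda>l. snd ` set (R l)) \<rho> w \<longleftrightarrow> step_count R \<rho> w v \<noteq> 0"
  by (force simp: successors_def step_count_def filter_empty_conv)

lemma qder_eq_0:
  assumes "v \<notin> (\<Union>w\<in>terms f. successors (\<lambda>l. snd ` set (R l)) \<rho> w)"
  shows "qder R \<rho> f v = 0"
  unfolding qder_def
proof (intro sum.neutral ballI)
  fix w assume "w \<in> terms f"
  with assms have "v \<notin> successors (\<lambda>l. snd ` set (R l)) \<rho> w" by blast
  then show "f w * qder_word R \<rho> w v = 0" by (simp add: qder_word_eq_0)
qed

lemma finite_successors: "(\<And>l. finite (U l)) \<Longrightarrow> finite (successors U \<rho> w)"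
  by (simp add: successors_def)

lemma
  fixes f :: "('s, 'k::{comm_ring_1, ring_char_0}) elem"
  assumes unit: "\<And>l. \<forall>(c, u)\<in>set (R l). poly c 1 = 1" and f: "positive_at_one f"
  shows terms_qder: "terms (qder R \<rho> f) = (\<Union>w\<in>terms f. successors (\<lambda>l. snd ` set (R l)) \<rho> w)"
    and positive_at_one_qder: "positive_at_one (qder R \<rho> f)"
proof -
  let ?S = "successors (\<lambda>l. snd ` set (R l)) \<rho>"
  have fin: "finite (terms f)" using f by (simp add: positive_at_one_def)
  obtain mult where mult: "\<And>w. w \<in> terms f \<Longrightarrow> mult w > 0 \<and> poly (f w) 1 = of_nat (mult w)"
    using f unfolding positive_at_one_def by metis
  have at_one: "poly (qder R \<rho> f v) 1 = of_nat (\<Sum>w\<in>terms f. mult w * step_count R \<rho> w v)" for v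
    unfolding qder_def poly_sum of_nat_sum
    by (intro sum.cong refl) (simp add: poly_qder_word_at_one[OF unit] mult)
  have nonzero: "poly (qder R \<rho> f v) 1 \<noteq> 0" if v: "v \<in> (\<Union>w\<in>terms f. ?S w)" for v
  proof -
    obtain w where w: "w \<in> terms f" and "step_count R \<rho> w v \<noteq> 0"
      using v mem_successors_iff_step_count by blast
    then have "mult w * step_count R \<rho> w v \<noteq> 0" using mult by simp
    then have "(\<Sum>w\<in>terms f. mult w * step_count R \<rho> w v) > 0"
      by (intro sum_pos2[OF fin w]) simp_all
    then show ?thesis unfolding at_one of_nat_eq_0_iff by simp
  qed
  show terms: "terms (qder R \<rho> f) = (\<Union>w\<in>terms f. ?S w)"
  proof (intro set_eqI iffI)
    fix v assume "v \<in> terms (qder R \<rho> f)"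
    then show "v \<in> (\<Union>w\<in>terms f. ?S w)" using qder_eq_0 unfolding terms_def by blast
  next
    fix v assume "v \<in> (\<Union>w\<in>terms f. ?S w)"
    then have "poly (qder R \<rho> f v) 1 \<noteq> 0" by (rule nonzero)
    then show "v \<in> terms (qder R \<rho> f)" unfolding terms_def by auto
  qed
  show "positive_at_one (qder R \<rho> f)"
    unfolding positive_at_one_def terms
  proof (intro conjI ballI)
    show "finite (\<Union>w\<in>terms f. ?S w)"
      using fin by (simp add: finite_successors)
  next
    fix v assume "v \<in> (\<Union>w\<in>terms f. ?S w)"
    then show "\<exists>m>0. poly (qder R \<rho> f v) 1 = of_nat m"
      using at_one[of v] nonzero[of v] by (metis gr0I of_nat_0)
  qed
qed

lemma positive_at_one_word_elem:
  "positive_at_one (word_elem u :: ('s, 'k::{comm_ring_1, ring_char_0}) elem)"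
proof -
  have "terms (word_elem u :: ('s, 'k) elem) = {u}"
    by (auto simp: terms_def word_elem_def)
  then show ?thesis
    unfolding positive_at_one_def by (auto simp: word_elem_def intro!: exI[of _ "1::nat"])
qed

definition tansec_words :: "xy \<times> nat \<Rightarrow> xy word set" where
  "tansec_words l =
     (case l of (X, j) \<Rightarrow> {[], [(X, j), (X, Suc j)]} | (Y, j) \<Rightarrow> {[(X, j), (Y, Suc j)]})"

lemma image_snd_tansec_rule: "snd ` set (tansec_rule l) = tansec_words l"
  by (cases l) (auto simp: tansec_rule_def tansec_words_def split: xy.split)

lemma poly_tansec_rule_at_one: "\<forall>(c, u)\<in>set (tansec_rule l). poly c 1 = 1"
  by (cases l) (simp add: tansec_rule_def qvar_def split: xy.split)

lemma
  fixes f :: "(xy, 'k::{comm_ring_1, ring_char_0}) elem"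
  assumes "positive_at_one f"
  shows terms_D_tansec: "terms (D_tansec f) = (\<Union>w\<in>terms f. successors tansec_words DIO w)"
    and positive_at_one_D_tansec: "positive_at_one (D_tansec f)"
  using terms_qder[OF poly_tansec_rule_at_one assms]
    positive_at_one_qder[OF poly_tansec_rule_at_one assms]
  by (simp_all add: D_tansec_def image_snd_tansec_rule)

lemma positive_at_one_D_tansec_power:
  fixes f :: "(xy, 'k::{comm_ring_1, ring_char_0}) elem"
  shows "positive_at_one f \<Longrightarrow> positive_at_one ((D_tansec ^^ n) f)"
  by (induction n) (simp_all add: positive_at_one_D_tansec)

section \<open>One derivation step on a block x_{m+1}^p x_m^r\<close>

lemma inj_dio_pos: "inj dio_pos"
  unfolding inj_def dio_pos_def by (auto split: xy.splits prod.splits; presburger)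

definition xblock :: "nat \<Rightarrow> nat \<Rightarrow> nat \<Rightarrow> xy word" where
  "xblock m p r = replicate p (X, Suc m) @ replicate r (X, m)"

lemma DIO_eq_xblock:
  assumes "mset w = mset (xblock m p r)"
  shows "DIO w = xblock m p r"
  unfolding DIO_def
proof (rule sort_key_inj_key_eq[OF assms])
  show "inj_on dio_pos (set w)"
    using inj_dio_pos by (rule inj_on_subset) simp
  show "sorted (map dio_pos (xblock m p r))"
    by (auto simp: xblock_def sorted_append dio_pos_def)
qed

lemma up_replicate: "up (replicate k (s, i)) = replicate k (s, Suc i)"
  by (simp add: up_def)

lemma up_append: "up (xs @ ys) = up xs @ up ys"
  by (simp add: up_def)

lemma successors_xblock_at_upper:
  assumes "j < p"
  shows "(\<lambda>u. DIO (take j (xblock m p r) @ u @ up (drop (Suc j) (xblock m p r))))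
           ` tansec_words (xblock m p r ! j)
       = {xblock (Suc m) (p - Suc j) (j + r), xblock (Suc m) (p - j) (Suc j + r)}"
proof -
  have "take j (xblock m p r) = replicate j (X, Suc m)"
    and "drop (Suc j) (xblock m p r) = replicate (p - Suc j) (X, Suc m) @ replicate r (X, m)"
    and "xblock m p r ! j = (X, Suc m)"
    using assms by (simp_all add: xblock_def nth_append)
  then show ?thesis
    using assms by (simp add: tansec_words_def up_append up_replicate)
      (intro arg_cong2[where f = "\<lambda>a b. {a, b}"] DIO_eq_xblock;
       auto simp: multiset_eq_iff xblock_def)
qed

lemma successors_xblock_at_lower:
  assumes "i < r"
  shows "(\<lambda>u. DIO (take (p + i) (xblock m p r) @ u @ up (drop (Suc (p + i)) (xblock m p r))))
           ` tansec_words (xblock m p r ! (p + i))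
       = {xblock m (p + r - Suc i) i, xblock m (p + r - i) (Suc i)}"
proof -
  have "take (p + i) (xblock m p r) = replicate p (X, Suc m) @ replicate i (X, m)"
    and "drop (Suc (p + i)) (xblock m p r) = replicate (r - Suc i) (X, m)"
    and "xblock m p r ! (p + i) = (X, m)"
    using assms by (simp_all add: xblock_def nth_append)
  then show ?thesis
    using assms by (simp add: tansec_words_def up_append up_replicate)
      (intro arg_cong2[where f = "\<lambda>a b. {a, b}"] DIO_eq_xblock;
       auto simp: multiset_eq_iff xblock_def)
qed

lemma successors_xblock:
  "successors tansec_words DIO (xblock m p r) =
     (\<Union>j<p. {xblock (Suc m) (p - Suc j) (j + r), xblock (Suc m) (p - j) (Suc j + r)}) \<union>
     (\<Union>i<r. {xblock m (p + r - Suc i) i, xblock m (p + r - i) (Suc i)})"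
proof -
  have "{..<length (xblock m p r)} = {..<p} \<union> (\<lambda>i. p + i) ` {..<r}"
    by (auto simp: xblock_def image_iff Ball_def) presburger
  then show ?thesis
    unfolding successors_def
    by (simp add: successors_xblock_at_upper successors_xblock_at_lower cong: SUP_cong_simp)
qed

lemma xblock_no_lower: "xblock m p 0 = xblock (Suc m) 0 p"
  by (simp add: xblock_def)

section \<open>The terms of D^n(x_0)\<close>

text \<open>Here xblock m p r is the word x_{m+1}^p x_m^r. For n \<ge> 2 the terms of D^n(x_0) are
  the blocks with level_block n m p r: besides x_1^n x_0 and x_n x_{n-1}^n, the long blocks of
  maximal length n + 1 and the short blocks, of length at most n - 1 and of parity opposite
  to n. The parameters are not unique, since xblock m p 0 = xblock (Suc m) 0 p.\<close>

definition long_block :: "nat \<Rightarrow> nat \<Rightarrow> nat \<Rightarrow> nat \<Rightarrow> bool" where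
  "long_block n m p r \<longleftrightarrow> 1 \<le> m \<and> m + 2 \<le> n \<and> 1 \<le> p \<and> 1 \<le> r \<and> p + r = n + 1"

definition short_block :: "nat \<Rightarrow> nat \<Rightarrow> nat \<Rightarrow> nat \<Rightarrow> bool" where
  "short_block n m p r \<longleftrightarrow>
     1 \<le> m \<and> m + 1 \<le> n \<and> (0 < p \<longrightarrow> m + 2 \<le> n) \<and> p + r + 1 \<le> n \<and> odd (n + p + r)"

definition level_block :: "nat \<Rightarrow> nat \<Rightarrow> nat \<Rightarrow> nat \<Rightarrow> bool" where
  "level_block n m p r \<longleftrightarrow> (m = 0 \<and> p = n \<and> r = 1) \<or> (m = n - 1 \<and> p = 1 \<and> r = n) \<or>
     long_block n m p r \<or> short_block n m p r"

definition reachable :: "nat \<Rightarrow> xy word \<Rightarrow> bool" where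
  "reachable n w \<longleftrightarrow> (\<exists>m p r. w = xblock m p r \<and> level_block n m p r)"

lemma reachable_xblockI:
  assumes "level_block n m p r \<or> (r = 0 \<and> level_block n (Suc m) 0 p)"
  shows "reachable n (xblock m p r)"
  using assms unfolding reachable_def by (metis xblock_no_lower)

lemma reachable_successor:
  assumes n: "2 \<le> n" and w: "reachable n w" and v: "v \<in> successors tansec_words DIO w"
  shows "reachable (Suc n) v"
proof -
  obtain m p r where w: "w = xblock m p r" and lvl: "level_block n m p r"
    using assms unfolding reachable_def by blast
  from v consider
      (upper) j where "j < p"
        "v = xblock (Suc m) (p - Suc j) (j + r) \<or> v = xblock (Suc m) (p - j) (Suc j + r)"
    | (lower) i where "i < r"
        "v = xblock m (p + r - Suc i) i \<or> v = xblock m (p + r - i) (Suc i)"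
    unfolding w successors_xblock by blast
  then show ?thesis
  proof cases
    case upper
    with n lvl show ?thesis
      by (auto intro!: reachable_xblockI simp: level_block_def long_block_def short_block_def)
  next
    case lower
    with n lvl show ?thesis
      by (auto intro!: reachable_xblockI simp: level_block_def long_block_def short_block_def)
  qed
qed

lemma successors_xblock_upperI:
  "j < p \<Longrightarrow> v = xblock (Suc m) (p - Suc j) (j + r) \<or> v = xblock (Suc m) (p - j) (Suc j + r) \<Longrightarrow>
   v \<in> successors tansec_words DIO (xblock m p r)"
  unfolding successors_xblock by blast

lemma successors_xblock_lowerI:
  "i < r \<Longrightarrow> v = xblock m (p + r - Suc i) i \<or> v = xblock m (p + r - i) (Suc i) \<Longrightarrow>
   v \<in> successors tansec_words DIO (xblock m p r)"
  unfolding successors_xblock by blast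

lemma reachable_predecessorI:
  "level_block n m p r \<Longrightarrow> v \<in> successors tansec_words DIO (xblock m p r) \<Longrightarrow>
   \<exists>w. reachable n w \<and> v \<in> successors tansec_words DIO w"
  unfolding reachable_def by blast

lemma single_level_predecessor:
  assumes n: "2 \<le> n" and m: "1 \<le> m" "m \<le> n" and r: "1 \<le> r" "r \<le> n" and parity: "odd (n + r + 1)"
  shows "\<exists>w. reachable n w \<and> xblock m 0 r \<in> successors tansec_words DIO w"
proof -
  consider "r = n" "m = 1" | "r = n" "m \<noteq> 1" | "r + 2 \<le> n" "m < n" | "r + 2 \<le> n" "m = n"
  proof -
    have "r = n \<or> r + 2 \<le> n" using r parity by presburger
    with m that show thesis by fastforce
  qed
  then show ?thesis
  proof cases
    case 1
    then show ?thesis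
      by (intro reachable_predecessorI[of n 0 n 1] successors_xblock_lowerI[of 0])
         (auto simp: level_block_def xblock_no_lower)
  next
    case 2
    then show ?thesis using m
      by (intro reachable_predecessorI[of n "m - 1" 1 n] successors_xblock_lowerI[of 0])
         (auto simp: level_block_def long_block_def xblock_no_lower)
  next
    case 3
    then show ?thesis using m parity
      by (intro reachable_predecessorI[of n m 0 "r + 1"] successors_xblock_lowerI[of r])
         (auto simp: level_block_def short_block_def)
  next
    case 4
    then show ?thesis using n parity
      by (intro reachable_predecessorI[of n "n - 1" 0 "r + 1"] successors_xblock_lowerI[of 0])
         (auto simp: level_block_def short_block_def xblock_no_lower)
  qed
qed

lemma long_block_predecessor:
  assumes n: "2 \<le> n" and long: "long_block (Suc n) m p r"
  shows "\<exists>w. reachable n w \<and> xblock m p r \<in> successors tansec_words DIO w"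
proof (cases "r \<le> n")
  case True
  have "p = Suc (Suc n) - r" using long by (auto simp: long_block_def)
  with True long show ?thesis
    by (intro reachable_predecessorI[of n m 1 n] successors_xblock_lowerI[of "r - 1"])
       (auto simp: level_block_def long_block_def)
next
  case False
  then have "p = 1" "r = Suc n" using long by (auto simp: long_block_def)
  with long n show ?thesis
    by (intro reachable_predecessorI[of n "m - 1" n 1] successors_xblock_upperI[of "n - 1"])
       (auto simp: level_block_def long_block_def)
qed

lemma short_block_predecessor:
  assumes n: "2 \<le> n" and short: "short_block (Suc n) m p r"
  shows "\<exists>w. reachable n w \<and> xblock m p r \<in> successors tansec_words DIO w"
proof -
  consider "p = 0" "r = 0" | "1 \<le> p" "1 \<le> r" | "p = 0" "1 \<le> r" | "1 \<le> p" "r = 0"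
    by linarith
  then show ?thesis
  proof cases
    case 1
    with short n show ?thesis
      by (intro reachable_predecessorI[of n 1 0 1] successors_xblock_lowerI[of 0])
         (auto simp: level_block_def short_block_def xblock_def)
  next
    case 2
    with short show ?thesis
      by (intro reachable_predecessorI[of n m 0 "p + r - 1"] successors_xblock_lowerI[of "r - 1"])
         (auto simp: level_block_def short_block_def)
  next
    case 3
    with short n show ?thesis unfolding \<open>p = 0\<close>
      by (intro single_level_predecessor) (auto simp: short_block_def)
  next
    case 4
    with short n show ?thesis unfolding \<open>r = 0\<close> xblock_no_lower
      by (intro single_level_predecessor) (auto simp: short_block_def)
  qed
qed

lemma reachable_predecessor:
  assumes n: "2 \<le> n" and v: "reachable (Suc n) v"
  shows "\<exists>w. reachable n w \<and> v \<in> successors tansec_words DIO w"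
proof -
  obtain m p r where v: "v = xblock m p r" and lvl: "level_block (Suc n) m p r"
    using assms unfolding reachable_def by blast
  from lvl consider (first) "m = 0" "p = Suc n" "r = 1" | (last) "m = n" "p = 1" "r = Suc n"
    | (long) "long_block (Suc n) m p r" | (short) "short_block (Suc n) m p r"
    unfolding level_block_def by auto
  then show ?thesis
  proof cases
    case first
    then show ?thesis unfolding v
      by (intro reachable_predecessorI[of n 0 n 1] successors_xblock_lowerI[of 0])
         (auto simp: level_block_def)
  next
    case last
    with n show ?thesis unfolding v
      by (intro reachable_predecessorI[of n "n - 1" 1 n] successors_xblock_upperI[of 0])
         (auto simp: level_block_def)
  next
    case long
    with n show ?thesis unfolding v by (rule long_block_predecessor)
  next
    case short
    with n show ?thesis unfolding v by (rule short_block_predecessor)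
  qed
qed

lemma reachable_Suc:
  assumes "2 \<le> n"
  shows "{w. reachable (Suc n) w} = (\<Union>w\<in>{w. reachable n w}. successors tansec_words DIO w)"
  using reachable_successor[OF assms] reachable_predecessor[OF assms] by auto

lemma reachable_2: "{w. reachable 2 w} = {xblock 0 2 1, xblock 1 1 2, xblock 1 0 1}"
proof -
  have "short_block 2 m p r \<longleftrightarrow> m = 1 \<and> p = 0 \<and> r = 1" for m p r
    unfolding short_block_def by (cases r; cases p) auto
  then have "level_block 2 m p r \<longleftrightarrow> (m, p, r) \<in> {(0, 2, 1), (1, 1, 2), (1, 0, 1)}" for m p r
    unfolding level_block_def long_block_def by auto
  then show ?thesis unfolding reachable_def by auto
qed

lemma terms_D_tansec_power_2:
  "terms ((D_tansec ^^ 2) (word_elem [(X, 0)]) :: (xy, 'k::{comm_ring_1, ring_char_0}) elem)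
     = {w. reachable 2 w}"
proof -
  have "terms (word_elem [(X, 0)] :: (xy, 'k) elem) = {xblock 0 0 1}"
    by (auto simp: terms_def word_elem_def xblock_def)
  then have "terms ((D_tansec ^^ 2) (word_elem [(X, 0)]) :: (xy, 'k) elem)
      = (\<Union>w\<in>successors tansec_words DIO (xblock 0 0 1). successors tansec_words DIO w)"
    by (simp add: numeral_2_eq_2 terms_D_tansec positive_at_one_D_tansec positive_at_one_word_elem)
  moreover have "successors tansec_words DIO (xblock 0 0 1) = {xblock 0 0 0, xblock 0 1 1}"
    by (simp add: successors_xblock lessThan_Suc)
  moreover have "successors tansec_words DIO (xblock 0 0 0) = {}"
    by (simp add: successors_xblock)
  moreover have
    "successors tansec_words DIO (xblock 0 1 1) = {xblock 0 2 1, xblock 1 1 2, xblock 1 0 1}"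
    by (simp add: successors_xblock xblock_no_lower lessThan_Suc numeral_2_eq_2) blast
  ultimately show ?thesis by (simp add: reachable_2)
qed

lemma terms_D_tansec_power:
  "2 \<le> n \<Longrightarrow> terms ((D_tansec ^^ n) (word_elem [(X, 0)]) :: (xy, 'k::{comm_ring_1, ring_char_0}) elem)
     = {w. reachable n w}"
proof (induction n rule: dec_induct)
  case base
  then show ?case by (rule terms_D_tansec_power_2)
next
  case (step n)
  then show ?case
    by (simp add: terms_D_tansec positive_at_one_D_tansec_power positive_at_one_word_elem
        reachable_Suc)
qed

section \<open>Counting the terms\<close>

definition short_lengths :: "nat \<Rightarrow> nat set" where
  "short_lengths n = {L. 1 \<le> L \<and> L < n \<and> odd (n + L)}"

definition long_triples :: "nat \<Rightarrow> (nat \<times> nat \<times> nat) set" where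
  "long_triples n = {(m, p, r). long_block n m p r}"

definition short_triples :: "nat \<Rightarrow> (nat \<times> nat \<times> nat) set" where
  "short_triples n = {(m, p, r). 1 \<le> m \<and> m + 2 \<le> n \<and> 1 \<le> r \<and> p + r \<in> short_lengths n}"

definition top_short_triples :: "nat \<Rightarrow> (nat \<times> nat \<times> nat) set" where
  "top_short_triples n = (\<lambda>r. (n - 1, 0, r)) ` short_lengths n"

text \<open>Normal forms (m, p, r), with r \<ge> 1, of the reachable blocks; the empty word is the only
  reachable word that has none.\<close>

definition reachable_triples :: "nat \<Rightarrow> (nat \<times> nat \<times> nat) set" where
  "reachable_triples n =
     {(0, n, 1), (n - 1, 1, n)} \<union> long_triples n \<union> short_triples n \<union> top_short_triples n"

lemma short_block_iff_triples:
  assumes "1 \<le> r"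
  shows "short_block n m p r \<longleftrightarrow> (m, p, r) \<in> short_triples n \<union> top_short_triples n"
  using assms
  by (auto simp: short_block_def short_triples_def top_short_triples_def short_lengths_def)

lemma reachable_triples_lower_pos: "2 \<le> n \<Longrightarrow> (m, p, r) \<in> reachable_triples n \<Longrightarrow> 1 \<le> r"
  by (auto simp: reachable_triples_def long_triples_def long_block_def short_triples_def
      top_short_triples_def short_lengths_def)

lemma level_block_iff_triples:
  assumes "2 \<le> n" and "1 \<le> r"
  shows "level_block n m p r \<longleftrightarrow> (m, p, r) \<in> reachable_triples n"
  using assms
  unfolding level_block_def reachable_triples_def long_triples_def
    short_block_iff_triples[OF assms(2)]
  by auto

lemma reachable_eq_triples:
  assumes n: "2 \<le> n"
  shows "{w. reachable n w} =
    (\<lambda>(m, p, r). xblock m p r) ` reachable_triples n \<union> (if odd n then {[]} else {})"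
proof (intro set_eqI iffI)
  fix w assume "w \<in> {w. reachable n w}"
  then obtain m p r where w: "w = xblock m p r" and lvl: "level_block n m p r"
    unfolding reachable_def by blast
  consider "1 \<le> r" | "r = 0" "p = 0" | "r = 0" "1 \<le> p" by linarith
  then show "w \<in> (\<lambda>(m, p, r). xblock m p r) ` reachable_triples n \<union> (if odd n then {[]} else {})"
  proof cases
    case 1
    with n lvl show ?thesis unfolding w level_block_iff_triples[OF n 1] by force
  next
    case 2
    with lvl show ?thesis
      unfolding w by (auto simp: level_block_def long_block_def short_block_def xblock_def)
  next
    case 3
    with n lvl have "level_block n (Suc m) 0 p"
      by (auto simp: level_block_def long_block_def short_block_def)
    with n 3 show ?thesis
      unfolding w \<open>r = 0\<close> xblock_no_lower level_block_iff_triples[OF n 3(2)] by force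
  qed
next
  fix w
  assume w: "w \<in> (\<lambda>(m, p, r). xblock m p r) ` reachable_triples n \<union> (if odd n then {[]} else {})"
  then consider (block) m p r where "w = xblock m p r" "(m, p, r) \<in> reachable_triples n"
    | (empty) "w = []" "odd n"
    by (auto split: if_splits)
  then show "w \<in> {w. reachable n w}"
  proof cases
    case block
    then show ?thesis
      using n reachable_triples_lower_pos level_block_iff_triples unfolding reachable_def by blast
  next
    case empty
    then have "w = xblock 1 0 0" "level_block n 1 0 0"
      using n by (simp_all add: xblock_def level_block_def short_block_def)
    then show ?thesis unfolding reachable_def by blast
  qed
qed

lemma xblock_eq_iff:
  assumes "1 \<le> r" "1 \<le> r'"
  shows "xblock m p r = xblock m' p' r' \<longleftrightarrow> m = m' \<and> p = p' \<and> r = r'"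
proof
  assume eq: "xblock m p r = xblock m' p' r'"
  have "last (xblock m p r) = (X, m)" "last (xblock m' p' r') = (X, m')"
    using assms by (cases r; cases r'; simp add: xblock_def)+
  with eq have "m = m'" by simp
  moreover have "count (mset (xblock m p r)) (X, m) = r"
    and "count (mset (xblock m' p' r')) (X, m') = r'"
    by (simp_all add: xblock_def)
  moreover have "length (xblock m p r) = p + r" "length (xblock m' p' r') = p' + r'"
    by (simp_all add: xblock_def)
  ultimately show "m = m' \<and> p = p' \<and> r = r'" using eq by auto
qed simp

lemma finite_short_lengths: "finite (short_lengths n)"
  unfolding short_lengths_def by (rule finite_subset[of _ "{..<n}"]) auto

lemma card_long_triples: "card (long_triples n) = (n - 2) * n"
proof -
  have "long_triples n = (\<lambda>(m, p). (m, p, n + 1 - p)) ` ({1..n - 2} \<times> {1..n})"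
    by (auto simp: long_triples_def long_block_def image_iff)
  moreover have "inj_on (\<lambda>(m, p). (m, p, n + 1 - p)) ({1..n - 2} \<times> {1..n})"
    by (auto intro: inj_onI)
  ultimately show ?thesis by (simp add: card_image card_cartesian_product)
qed

lemma card_short_triples: "card (short_triples n) = (\<Sum>L\<in>short_lengths n. (n - 2) * L)"
proof -
  let ?S = "SIGMA L:short_lengths n. {1..n - 2} \<times> {..<L}"
  have "short_triples n = (\<lambda>(L, m, p). (m, p, L - p)) ` ?S"
  proof (intro set_eqI iffI)
    fix t assume "t \<in> short_triples n"
    then obtain m p r where "t = (m, p, r)" "1 \<le> m" "m + 2 \<le> n" "1 \<le> r" "p + r \<in> short_lengths n"
      unfolding short_triples_def by auto
    then show "t \<in> (\<lambda>(L, m, p). (m, p, L - p)) ` ?S"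
      by (intro image_eqI[of _ _ "(p + r, m, p)"]) auto
  qed (auto simp: short_triples_def)
  moreover have "inj_on (\<lambda>(L, m, p). (m, p, L - p)) ?S"
    by (auto intro!: inj_onI)
  ultimately have "card (short_triples n) = card ?S" by (simp add: card_image)
  also have "\<dots> = (\<Sum>L\<in>short_lengths n. (n - 2) * L)"
    by (simp add: card_SigmaI finite_short_lengths card_cartesian_product)
  finally show ?thesis .
qed

lemma card_top_short_triples: "card (top_short_triples n) = card (short_lengths n)"
  unfolding top_short_triples_def by (rule card_image) (auto intro: inj_onI)

lemma finite_reachable_triples: "finite (reachable_triples n)"
  by (rule finite_subset[of _ "{..n} \<times> {..n + 1} \<times> {..n + 1}"])
     (auto simp: reachable_triples_def long_triples_def long_block_def short_triples_def
        top_short_triples_def short_lengths_def)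

lemma card_reachable_triples:
  assumes n: "2 \<le> n"
  shows "card (reachable_triples n) =
    2 + (n - 2) * n + (\<Sum>L\<in>short_lengths n. (n - 2) * L) + card (short_lengths n)"
proof -
  let ?E = "{(0, n, 1), (n - 1, 1, n)}"
  have fin: "finite (?E \<union> long_triples n)" "finite (short_triples n)" "finite (top_short_triples n)"
    using finite_reachable_triples[of n] unfolding reachable_triples_def by simp_all
  have disj: "?E \<inter> long_triples n = {}" "(?E \<union> long_triples n) \<inter> short_triples n = {}"
    "(?E \<union> long_triples n \<union> short_triples n) \<inter> top_short_triples n = {}"
    using n by (auto simp: long_triples_def long_block_def short_triples_def top_short_triples_def
        short_lengths_def)
  have "card (reachable_triples n)
      = card (?E \<union> long_triples n \<union> short_triples n) + card (top_short_triples n)"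
    unfolding reachable_triples_def using fin disj by (intro card_Un_disjoint) auto
  also have "card (?E \<union> long_triples n \<union> short_triples n)
      = card (?E \<union> long_triples n) + card (short_triples n)"
    using fin disj by (intro card_Un_disjoint) auto
  also have "card (?E \<union> long_triples n) = card ?E + card (long_triples n)"
    using fin disj by (intro card_Un_disjoint) auto
  also have "card ?E = 2" using n by simp
  finally show ?thesis
    by (simp add: card_long_triples card_short_triples card_top_short_triples)
qed

lemma card_reachable:
  assumes n: "2 \<le> n"
  shows "card {w. reachable n w} = card (reachable_triples n) + (if odd n then 1 else 0)"
proof -
  have inj: "inj_on (\<lambda>(m, p, r). xblock m p r) (reachable_triples n)"
    using reachable_triples_lower_pos[OF n] by (auto intro!: inj_onI simp: xblock_eq_iff)
  have "[] \<notin> (\<lambda>(m, p, r). xblock m p r) ` reachable_triples n"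
    by (auto simp: xblock_def dest!: reachable_triples_lower_pos[OF n])
  then show ?thesis
    unfolding reachable_eq_triples[OF n]
    by (simp add: card_Un_disjoint card_image[OF inj] finite_reachable_triples)
qed

lemma short_lengths_odd: "short_lengths (2 * k + 1) = (\<lambda>j. 2 * j) ` {1..k}"
proof (intro set_eqI iffI)
  fix L assume "L \<in> short_lengths (2 * k + 1)"
  then have "1 \<le> L" "L \<le> 2 * k" "even L" unfolding short_lengths_def by auto
  then show "L \<in> (\<lambda>j. 2 * j) ` {1..k}" by (intro image_eqI[of _ _ "L div 2"]) auto
qed (auto simp: short_lengths_def)

lemma short_lengths_even: "short_lengths (2 * k) = (\<lambda>j. 2 * j + 1) ` {..<k}"
proof (intro set_eqI iffI)
  fix L assume "L \<in> short_lengths (2 * k)"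
  then have "L < 2 * k" "odd L" unfolding short_lengths_def by auto
  then show "L \<in> (\<lambda>j. 2 * j + 1) ` {..<k}" by (intro image_eqI[of _ _ "L div 2"]) auto
qed (auto simp: short_lengths_def)

lemma sum_short_lengths_odd: "(\<Sum>L\<in>short_lengths (2 * k + 1). L) = k * (k + 1)"
proof -
  have "(\<Sum>j=1..k. 2 * j) = k * (k + 1)" by (induction k) auto
  then show ?thesis unfolding short_lengths_odd by (simp add: sum.reindex inj_on_def)
qed

lemma sum_short_lengths_even: "(\<Sum>L\<in>short_lengths (2 * k). L) = k * k"
proof -
  have "(\<Sum>j<k. 2 * j + 1) = k * k" by (induction k) auto
  then show ?thesis unfolding short_lengths_even by (simp add: sum.reindex inj_on_def)
qed

lemma card_short_lengths_odd: "card (short_lengths (2 * k + 1)) = k"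
  unfolding short_lengths_odd by (simp add: card_image inj_on_def)

lemma card_short_lengths_even: "card (short_lengths (2 * k)) = k"
  unfolding short_lengths_even by (simp add: card_image inj_on_def)

lemma card_reachable_odd:
  assumes "1 \<le> k"
  shows "card {w. reachable (2 * k + 1) w} = 2 * k ^ 3 + 5 * k ^ 2 + 2"
proof -
  obtain k' where k: "k = Suc k'" using assms by (cases k) auto
  have "card {w. reachable (2 * k + 1) w} = 2 + (2 * k - 1) * (2 * k + 1)
      + (2 * k - 1) * (\<Sum>L\<in>short_lengths (2 * k + 1). L) + card (short_lengths (2 * k + 1)) + 1"
    using assms card_reachable[of "2 * k + 1"] card_reachable_triples[of "2 * k + 1"]
    by (simp add: sum_distrib_left)
  also have "\<dots> = 2 + (2 * k - 1) * (2 * k + 1) + (2 * k - 1) * (k * (k + 1)) + k + 1"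
    unfolding sum_short_lengths_odd card_short_lengths_odd ..
  also have "\<dots> = 2 * k ^ 3 + 5 * k ^ 2 + 2"
    by (simp add: k algebra_simps power2_eq_square power3_eq_cube)
  finally show ?thesis .
qed

lemma card_reachable_even:
  assumes "2 \<le> k"
  shows "card {w. reachable (2 * k) w} = (k + 2) * (2 * k ^ 2 - 2 * k + 1)"
proof -
  obtain k' where k: "k = Suc (Suc k')" using assms by (metis add_2_eq_Suc le_Suc_ex)
  have "card {w. reachable (2 * k) w} = 2 + (2 * k - 2) * (2 * k)
      + (2 * k - 2) * (\<Sum>L\<in>short_lengths (2 * k). L) + card (short_lengths (2 * k))"
    using assms card_reachable[of "2 * k"] card_reachable_triples[of "2 * k"]
    by (simp add: sum_distrib_left)
  also have "\<dots> = 2 + (2 * k - 2) * (2 * k) + (2 * k - 2) * (k * k) + k"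
    unfolding sum_short_lengths_even card_short_lengths_even ..
  also have "\<dots> = (k + 2) * (2 * k ^ 2 - 2 * k + 1)"
    by (simp add: k algebra_simps power2_eq_square)
  finally show ?thesis .
qed

theorem proposition3p9:
  fixes n :: nat
  assumes "n \<ge> 3"
  shows "(\<forall>k. n = 2 * k + 1 \<longrightarrow>
            card (terms ((D_tansec ^^ n) (word_elem [(X, 0)]) :: (xy, 'k::{comm_ring_1, ring_char_0}) elem))
              = 2 * k ^ 3 + 5 * k ^ 2 + 2)
       \<and> (\<forall>k. n = 2 * k \<longrightarrow>
            card (terms ((D_tansec ^^ n) (word_elem [(X, 0)]) :: (xy, 'k) elem))
              = (k + 2) * (2 * k ^ 2 - 2 * k + 1))"
proof -
  have terms: "terms ((D_tansec ^^ n) (word_elem [(X, 0)]) :: (xy, 'k) elem) = {w. reachable n w}"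
    using assms by (intro terms_D_tansec_power) simp
  show ?thesis
    unfolding terms
  proof (intro conjI allI impI)
    fix k assume "n = 2 * k + 1"
    with assms show "card {w. reachable n w} = 2 * k ^ 3 + 5 * k ^ 2 + 2"
      using card_reachable_odd[of k] by simp
  next
    fix k assume "n = 2 * k"
    with assms show "card {w. reachable n w} = (k + 2) * (2 * k ^ 2 - 2 * k + 1)"
      using card_reachable_even[of k] by simp
  qed
qed

end
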